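(* For every $\alpha\in\bar{\mathbb{Q}}$ we have $H(\alpha)\ge H(H(\alpha))$, with equality if and only if $H(\alpha)=a^b$ for some $a\in\mathbb{N}$ and some rational $b>0$.
   Context: $\bar{\mathbb{Q}}$ is the algebraic closure of $\mathbb{Q}$ in $\mathbb{C}$. $H:\bar{\mathbb{Q}}\to\bar{\mathbb{Q}}\cap[1,\infty)$ is the absolute multiplicative Weil height: for $\alpha$ of degree $d$ with $a_0>0$ the leading coefficient of a minimal polynomial of $\alpha$ in $\mathbb{Z}[t]$ and conjugates $\alpha_1,\dots,\alpha_d$, $H(\alpha)=\big(a_0\prod_i\max\{1,|\alpha_i|\}\big)^{1/d}$ (this value is again algebraic, so $H$ can be iterated). *)

theory Defs
  imports "HOL-Computational_Algebra.Computational_Algebra"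
begin

definition min_int_poly :: "complex \<Rightarrow> int poly" where
  "min_int_poly \<alpha> = (THE p. irreducible p \<and> lead_coeff p > 0 \<and>
       poly (map_poly of_int p) \<alpha> = 0)"

definition weil_height :: "complex \<Rightarrow> real" where
  "weil_height \<alpha> =
     (let p = min_int_poly \<alpha> in
      root (degree p)
        (of_int (lead_coeff p) *
         (\<Prod>z\<in>{z. poly (map_poly of_int p) z = 0}. max 1 (cmod z))))"

end

theory Submission
  imports Defs "Berlekamp_Zassenhaus.Factorize_Int_Poly" "Jordan_Normal_Form.Jordan_Normal_Form"
begin

text \<open>Let \<open>M = a\<^sub>0 \<Prod> max 1 |\<alpha>\<^sub>i|\<close> be the Mahler measure of \<open>\<alpha>\<close>, so that \<open>H(\<alpha>) = M\<^bsup>1/d\<^esup>\<close>.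
  If \<open>S\<close> is the set of the \<open>k\<close> conjugates outside the unit circle, then \<open>M = |a\<^sub>0 \<Prod>\<^sub>S \<alpha>\<^sub>i|\<close>,
  and the products \<open>\<plusminus>a\<^sub>0 \<Prod>\<^sub>K \<alpha>\<^sub>i\<close> over all \<open>k\<close>-subsets \<open>K\<close> are the eigenvalues of an
  integer matrix (a scaled \<open>k\<close>-th compound of the companion matrix). They all have modulus
  at most \<open>M\<close>, so \<open>\<beta> = H(\<alpha>)\<close> is a root of a monic integer polynomial whose roots all
  have modulus at most \<open>\<beta>\<close>. Hence every conjugate of \<open>\<beta>\<close> lies in the disc of radius
  \<open>\<beta>\<close>, which gives \<open>H(\<beta>) \<le> \<beta>\<close>. Equality forces all conjugates onto the circle of
  radius \<open>\<beta>\<close>, so that \<open>\<beta>\<^sup>e\<close> is the absolute value of the constant coefficient of the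
  minimal polynomial; conversely \<open>a\<^bsup>r/t\<^esup>\<close> is a root of \<open>X\<^sup>t - a\<^sup>r\<close>, whose roots all have
  modulus \<open>a\<^bsup>r/t\<^esup>\<close>.\<close>

definition k_subsets :: "nat \<Rightarrow> nat \<Rightarrow> nat set set" where
  "k_subsets n k = {K. K \<subseteq> {0..<n} \<and> card K = k}"

lemma finite_k_subsets: "finite (k_subsets n k)"
  unfolding k_subsets_def by (rule finite_subset[of _ "Pow {0..<n}"]) auto

lemma k_subsets_sorted_list:
  assumes "K \<in> k_subsets n k"
  shows "length (sorted_list_of_set K) = k" "distinct (sorted_list_of_set K)"
    "set (sorted_list_of_set K) = K" "finite K" "K \<subseteq> {0..<n}"
proof -
  from assms have K: "K \<subseteq> {0..<n}" "card K = k" unfolding k_subsets_def by auto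
  then show "finite K" using finite_subset by blast
  with K show "length (sorted_list_of_set K) = k" "distinct (sorted_list_of_set K)"
    "set (sorted_list_of_set K) = K" "K \<subseteq> {0..<n}" by auto
qed

lemma k_subsets_nth:
  assumes "K \<in> k_subsets n k" and "i < k"
  shows "sorted_list_of_set K ! i \<in> K" "sorted_list_of_set K ! i < n"
proof -
  note K = k_subsets_sorted_list[OF assms(1)]
  show "sorted_list_of_set K ! i \<in> K" using nth_mem[of i "sorted_list_of_set K"] K(1,3) assms(2) by simp
  then show "sorted_list_of_set K ! i < n" using K(5) by auto
qed

lemma bij_betw_nth_k_subset:
  assumes "K \<in> k_subsets n k"
  shows "bij_betw ((!) (sorted_list_of_set K)) {0..<k} K"
  using k_subsets_sorted_list[OF assms] by (intro bij_betw_nth) auto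

subsection \<open>The Cauchy--Binet formula\<close>

text \<open>Choices of a row index for each of the first \<open>k\<close> rows, normalised to the identity
  elsewhere as in \<open>det_linear_rows_sum\<close>.\<close>
definition row_choices :: "nat \<Rightarrow> nat \<Rightarrow> (nat \<Rightarrow> nat) set" where
  "row_choices k n = {f. (\<forall>i\<in>{0..<k}. f i \<in> {0..<n}) \<and> (\<forall>i. i \<notin> {0..<k} \<longrightarrow> f i = i)}"

definition ordered_choice :: "nat \<Rightarrow> nat set \<Rightarrow> (nat \<Rightarrow> nat) \<Rightarrow> nat \<Rightarrow> nat" where
  "ordered_choice k K p i = (if i < k then sorted_list_of_set K ! p i else i)"

lemma det_mult_sum_injective_row_choices:
  fixes A :: "'a::comm_ring_1 mat"
  assumes A: "A \<in> carrier_mat k n" and B: "B \<in> carrier_mat n k"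
  shows "det (A * B) = (\<Sum>f \<in> {f \<in> row_choices k n. inj_on f {0..<k}}.
           (\<Prod>i\<in>{0..<k}. A $$ (i, f i)) * det (mat\<^sub>r k k (\<lambda>i. row B (f i))))"
proof -
  let ?F = "row_choices k n"
  let ?g = "\<lambda>f. det (mat\<^sub>r k k (\<lambda>i. A $$ (i, f i) \<cdot>\<^sub>v row B (f i)))"
  have g: "?g f = (\<Prod>i\<in>{0..<k}. A $$ (i, f i)) * det (mat\<^sub>r k k (\<lambda>i. row B (f i)))" for f
    by (rule det_rows_mul) (use B in auto)
  have zero: "?g f = 0" if "f \<in> ?F - {f \<in> ?F. inj_on f {0..<k}}" for f
  proof -
    from that obtain i j where "i < k" "j < k" "i \<noteq> j" "f i = f j"
      unfolding inj_on_def by auto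
    then have "det (mat\<^sub>r k k (\<lambda>i. row B (f i))) = 0"
      by (intro det_identical_rows[of _ k i j]) (use B in auto)
    with g[of f] show ?thesis by simp
  qed
  have "finite ?F" unfolding row_choices_def by (rule finite_bounded_functions) auto
  have "det (A * B) = sum ?g ?F"
    unfolding mat_mul_finsum_alt[OF A B] row_choices_def
    by (rule det_linear_rows_sum) (use A B in auto)
  also have "\<dots> = sum ?g {f \<in> ?F. inj_on f {0..<k}}"
    by (rule sum.mono_neutral_right[OF \<open>finite ?F\<close>]) (use zero in auto)
  finally show ?thesis by (simp only: g)
qed

lemma image_ordered_choice:
  assumes "K \<in> k_subsets n k" and "p permutes {0..<k}"
  shows "ordered_choice k K p ` {0..<k} = K"
proof -
  have "ordered_choice k K p ` {0..<k} = (!) (sorted_list_of_set K) ` p ` {0..<k}"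
    by (auto simp: image_image ordered_choice_def)
  also have "\<dots> = K"
    using permutes_image[OF assms(2)] bij_betw_imp_surj_on[OF bij_betw_nth_k_subset[OF assms(1)]] by simp
  finally show ?thesis .
qed

lemma ordered_choice_in_row_choices:
  assumes K: "K \<in> k_subsets n k" and p: "p permutes {0..<k}"
  shows "ordered_choice k K p \<in> row_choices k n" and "inj_on (ordered_choice k K p) {0..<k}"
proof -
  show "ordered_choice k K p \<in> row_choices k n"
    using k_subsets_nth(2)[OF K] permutes_in_image[OF p] by (auto simp: row_choices_def ordered_choice_def)
  have "inj_on ((!) (sorted_list_of_set K) \<circ> p) {0..<k}"
    using comp_inj_on[OF permutes_inj_on[OF p]] permutes_image[OF p]
      bij_betw_imp_inj_on[OF bij_betw_nth_k_subset[OF K]] by metis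
  then show "inj_on (ordered_choice k K p) {0..<k}"
    by (rule inj_on_cong[THEN iffD1, rotated]) (auto simp: ordered_choice_def)
qed

lemma injective_row_choice_ordered:
  assumes f: "f \<in> row_choices k n" and inj: "inj_on f {0..<k}"
  obtains K p where "K \<in> k_subsets n k" and "p permutes {0..<k}" and "f = ordered_choice k K p"
proof -
  define K where "K = f ` {0..<k}"
  have K: "K \<in> k_subsets n k"
    using f inj unfolding K_def k_subsets_def row_choices_def by (auto simp: card_image)
  let ?ix = "inv_into {0..<k} ((!) (sorted_list_of_set K))"
  define p where "p i = (if i < k then ?ix (f i) else i)" for i
  have "bij_betw f {0..<k} K"
    using inj unfolding K_def by (auto simp: bij_betw_def)
  then have "bij_betw (?ix \<circ> f) {0..<k} {0..<k}"
    by (rule bij_betw_trans) (rule bij_betw_inv_into[OF bij_betw_nth_k_subset[OF K]])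
  then have "bij_betw p {0..<k} {0..<k}"
    by (rule bij_betw_cong[THEN iffD1, rotated]) (simp add: p_def)
  then have p: "p permutes {0..<k}"
    by (rule bij_imp_permutes) (simp add: p_def)
  have "ordered_choice k K p i = f i" for i
  proof (cases "i < k")
    case True
    then have "f i \<in> K" by (simp add: K_def)
    with True show ?thesis
      using f_inv_into_f[of "f i" "(!) (sorted_list_of_set K)" "{0..<k}"]
        bij_betw_imp_surj_on[OF bij_betw_nth_k_subset[OF K]] by (simp add: p_def ordered_choice_def)
  next
    case False
    then show ?thesis using f by (simp add: row_choices_def ordered_choice_def)
  qed
  with K p show thesis by (intro that) auto
qed

lemma bij_betw_k_subsets_permutes_injective_row_choices:
  "bij_betw (\<lambda>(K, p). ordered_choice k K p) (k_subsets n k \<times> {p. p permutes {0..<k}})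
     {f \<in> row_choices k n. inj_on f {0..<k}}"
proof (rule bij_betw_imageI)
  show "inj_on (\<lambda>(K, p). ordered_choice k K p) (k_subsets n k \<times> {p. p permutes {0..<k}})"
  proof (rule inj_onI, clarsimp)
    fix K p K' p'
    assume K: "K \<in> k_subsets n k" and p: "p permutes {0..<k}"
      and K': "K' \<in> k_subsets n k" and p': "p' permutes {0..<k}"
      and eq: "ordered_choice k K p = ordered_choice k K' p'"
    from image_ordered_choice[OF K p] image_ordered_choice[OF K' p'] eq have "K = K'" by metis
    have "p i = p' i" for i
    proof (cases "i < k")
      case True
      with fun_cong[OF eq, of i] \<open>K = K'\<close>
      have "sorted_list_of_set K ! p i = sorted_list_of_set K ! p' i" by (simp add: ordered_choice_def)
      moreover have "p i < k" "p' i < k"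
        using permutes_in_image[OF p] permutes_in_image[OF p'] True by auto
      ultimately show ?thesis
        using k_subsets_sorted_list(1,2)[OF K] nth_eq_iff_index_eq by metis
    next
      case False
      then show ?thesis using permutes_not_in[OF p] permutes_not_in[OF p'] by auto
    qed
    with \<open>K = K'\<close> show "K = K' \<and> p = p'" by auto
  qed
  show "(\<lambda>(K, p). ordered_choice k K p) ` (k_subsets n k \<times> {p. p permutes {0..<k}}) =
      {f \<in> row_choices k n. inj_on f {0..<k}}"
  proof (intro equalityI subsetI)
    fix f assume "f \<in> {f \<in> row_choices k n. inj_on f {0..<k}}"
    then obtain K p where "K \<in> k_subsets n k" "p permutes {0..<k}" "f = ordered_choice k K p"
      using injective_row_choice_ordered by blast
    then show "f \<in> (\<lambda>(K, p). ordered_choice k K p) ` (k_subsets n k \<times> {p. p permutes {0..<k}})"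
      by force
  qed (use ordered_choice_in_row_choices in auto)
qed

lemma cauchy_binet:
  fixes A :: "'a::comm_ring_1 mat"
  assumes A: "A \<in> carrier_mat k n" and B: "B \<in> carrier_mat n k"
  shows "det (A * B) = (\<Sum>K \<in> k_subsets n k.
            det (mat k k (\<lambda>(i,j). A $$ (i, sorted_list_of_set K ! j))) *
            det (mat k k (\<lambda>(i,j). B $$ (sorted_list_of_set K ! i, j))))"
proof -
  let ?U = "{0..<k}"
  let ?AK = "\<lambda>K. mat k k (\<lambda>(i,j). A $$ (i, sorted_list_of_set K ! j))"
  let ?BK = "\<lambda>K. mat k k (\<lambda>(i,j). B $$ (sorted_list_of_set K ! i, j))"
  let ?t = "\<lambda>f. (\<Prod>i\<in>?U. A $$ (i, f i)) * det (mat\<^sub>r k k (\<lambda>i. row B (f i)))"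
  let ?h = "\<lambda>(K, p). ordered_choice k K p"
  have summand: "?t (?h (K, p)) = signof p * (\<Prod>i\<in>?U. A $$ (i, sorted_list_of_set K ! p i)) * det (?BK K)"
    if K: "K \<in> k_subsets n k" and p: "p permutes ?U" for K p
  proof -
    have "mat\<^sub>r k k (\<lambda>i. row B (?h (K, p) i)) = mat k k (\<lambda>(i,j). ?BK K $$ (p i, j))"
      using B permutes_in_image[OF p] k_subsets_nth(2)[OF K] by (intro eq_matI) (auto simp: ordered_choice_def)
    then have "det (mat\<^sub>r k k (\<lambda>i. row B (?h (K, p) i))) = signof p * det (?BK K)"
      using det_permute_rows[OF _ p, of "?BK K"] by simp
    then show ?thesis by (simp add: ac_simps ordered_choice_def)
  qed
  have det_AK: "det (?AK K) = (\<Sum>p | p permutes ?U. signof p * (\<Prod>i\<in>?U. A $$ (i, sorted_list_of_set K ! p i)))"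
    for K
    unfolding det_def'[of "?AK K" k, simplified]
    by (intro sum.cong refl arg_cong[where f = "\<lambda>x. _ * x"] prod.cong)
  have "det (A * B) = (\<Sum>x \<in> k_subsets n k \<times> {p. p permutes ?U}. ?t (?h x))"
    unfolding det_mult_sum_injective_row_choices[OF A B]
    by (rule sum.reindex_bij_betw[OF bij_betw_k_subsets_permutes_injective_row_choices, symmetric])
  also have "\<dots> = (\<Sum>(K, p) \<in> k_subsets n k \<times> {p. p permutes ?U}. ?t (?h (K, p)))"
    by (rule sum.cong) auto
  also have "\<dots> = (\<Sum>K \<in> k_subsets n k. \<Sum>p | p permutes ?U. ?t (?h (K, p)))"
    by (rule sum.cartesian_product[symmetric])
  also have "\<dots> = (\<Sum>K \<in> k_subsets n k. \<Sum>p | p permutes ?U.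
      signof p * (\<Prod>i\<in>?U. A $$ (i, sorted_list_of_set K ! p i)) * det (?BK K))"
    by (intro sum.cong refl) (simp only: summand mem_Collect_eq)
  also have "\<dots> = (\<Sum>K \<in> k_subsets n k. det (?AK K) * det (?BK K))"
    by (simp only: det_AK sum_distrib_right)
  finally show ?thesis .
qed

subsection \<open>Compound matrices\<close>

definition k_subset_list :: "nat \<Rightarrow> nat \<Rightarrow> nat set list" where
  "k_subset_list n k = (SOME xs. set xs = k_subsets n k \<and> distinct xs)"

lemma set_k_subset_list: "set (k_subset_list n k) = k_subsets n k"
  and distinct_k_subset_list: "distinct (k_subset_list n k)"
proof -
  have "\<exists>xs. set xs = k_subsets n k \<and> distinct xs"
    using finite_distinct_list[OF finite_k_subsets] .
  from someI_ex[OF this] show "set (k_subset_list n k) = k_subsets n k" "distinct (k_subset_list n k)"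
    unfolding k_subset_list_def by auto
qed

lemma nth_k_subset_list: "i < length (k_subset_list n k) \<Longrightarrow> k_subset_list n k ! i \<in> k_subsets n k"
  using set_k_subset_list nth_mem by blast

lemma sum_k_subset_list:
  "(\<Sum>l = 0..<length (k_subset_list n k). g (k_subset_list n k ! l)) = (\<Sum>K\<in>k_subsets n k. g K)"
  using sum.reindex_bij_betw[OF bij_betw_nth[OF distinct_k_subset_list refl refl], of g]
  by (simp add: set_k_subset_list lessThan_atLeast0)

definition minor :: "nat \<Rightarrow> 'a mat \<Rightarrow> nat set \<Rightarrow> nat set \<Rightarrow> 'a :: comm_ring_1" where
  "minor k A I J = det (mat k k (\<lambda>(a,b). A $$ (sorted_list_of_set I ! a, sorted_list_of_set J ! b)))"

definition compound_mat :: "nat \<Rightarrow> nat \<Rightarrow> 'a mat \<Rightarrow> 'a :: comm_ring_1 mat" where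
  "compound_mat n k A = mat (length (k_subset_list n k)) (length (k_subset_list n k))
     (\<lambda>(i,j). minor k A (k_subset_list n k ! i) (k_subset_list n k ! j))"

lemma compound_mat_carrier:
  "compound_mat n k A \<in> carrier_mat (length (k_subset_list n k)) (length (k_subset_list n k))"
  unfolding compound_mat_def by auto

lemma dim_compound_mat [simp]:
  "dim_row (compound_mat n k A) = length (k_subset_list n k)"
  "dim_col (compound_mat n k A) = length (k_subset_list n k)"
  unfolding compound_mat_def by auto

lemma minor_mult:
  fixes A B :: "'a :: comm_ring_1 mat"
  assumes A: "A \<in> carrier_mat n n" and B: "B \<in> carrier_mat n n"
    and I: "I \<in> k_subsets n k" and J: "J \<in> k_subsets n k"
  shows "minor k (A * B) I J = (\<Sum>K\<in>k_subsets n k. minor k A I K * minor k B K J)"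
proof -
  let ?AI = "mat k n (\<lambda>(a,l). A $$ (sorted_list_of_set I ! a, l))"
  let ?BJ = "mat n k (\<lambda>(l,b). B $$ (l, sorted_list_of_set J ! b))"
  have "mat k k (\<lambda>(a,b). (A * B) $$ (sorted_list_of_set I ! a, sorted_list_of_set J ! b)) = ?AI * ?BJ"
    using A B k_subsets_nth(2)[OF I] k_subsets_nth(2)[OF J]
    by (intro eq_matI) (auto simp: scalar_prod_def intro!: sum.cong)
  then have "minor k (A * B) I J = det (?AI * ?BJ)" unfolding minor_def by simp
  also have "\<dots> = (\<Sum>K\<in>k_subsets n k. minor k A I K * minor k B K J)"
    unfolding cauchy_binet[of ?AI k n ?BJ, simplified] minor_def
    by (intro sum.cong refl arg_cong2[where f = "(*)"] arg_cong[where f = det] eq_matI)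
       (auto dest: k_subsets_nth(2))
  finally show ?thesis .
qed

lemma compound_mat_mult:
  fixes A B :: "'a :: comm_ring_1 mat"
  assumes A: "A \<in> carrier_mat n n" and B: "B \<in> carrier_mat n n"
  shows "compound_mat n k (A * B) = compound_mat n k A * compound_mat n k B"
proof (rule eq_matI)
  let ?L = "k_subset_list n k"
  fix i j assume "i < dim_row (compound_mat n k A * compound_mat n k B)"
    and "j < dim_col (compound_mat n k A * compound_mat n k B)"
  then have i: "i < length ?L" and j: "j < length ?L" by (auto simp: compound_mat_def)
  have "(compound_mat n k A * compound_mat n k B) $$ (i,j) =
      (\<Sum>l = 0..<length ?L. minor k A (?L ! i) (?L ! l) * minor k B (?L ! l) (?L ! j))"
    using i j by (auto simp: compound_mat_def scalar_prod_def intro!: sum.cong)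
  also have "\<dots> = (\<Sum>K\<in>k_subsets n k. minor k A (?L ! i) K * minor k B K (?L ! j))"
    by (rule sum_k_subset_list)
  also have "\<dots> = minor k (A * B) (?L ! i) (?L ! j)"
    by (rule minor_mult[symmetric, OF A B nth_k_subset_list[OF i] nth_k_subset_list[OF j]])
  finally show "compound_mat n k (A * B) $$ (i, j) = (compound_mat n k A * compound_mat n k B) $$ (i,j)"
    using i j by (simp add: compound_mat_def)
qed (auto simp: compound_mat_def)

lemma minor_mat_diag:
  fixes v :: "nat \<Rightarrow> 'a :: comm_ring_1"
  assumes I: "I \<in> k_subsets n k" and J: "J \<in> k_subsets n k"
  shows "minor k (mat_diag n v) I J = (if I = J then (\<Prod>x\<in>I. v x) else 0)"
proof -
  note sI = k_subsets_sorted_list[OF I] and sJ = k_subsets_sorted_list[OF J]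
  let ?M = "mat k k (\<lambda>(a,b). mat_diag n v $$ (sorted_list_of_set I ! a, sorted_list_of_set J ! b))"
  show ?thesis
  proof (cases "I = J")
    case True
    have "upper_triangular ?M"
      unfolding upper_triangular_def using k_subsets_nth(2)[OF I] sI True
      by (auto simp: mat_diag_def nth_eq_iff_index_eq)
    then have "det ?M = prod_list (diag_mat ?M)" by (rule det_upper_triangular) auto
    also have "\<dots> = (\<Prod>a = 0..<k. v (sorted_list_of_set I ! a))"
      unfolding prod_list_diag_prod using k_subsets_nth(2)[OF I] True
      by (auto simp: mat_diag_def intro!: prod.cong)
    also have "\<dots> = (\<Prod>x\<in>I. v x)"
      using prod.reindex_bij_betw[OF bij_betw_nth_k_subset[OF I], of v] by simp
    finally show ?thesis using True unfolding minor_def by simp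
  next
    case False
    have "\<not> I \<subseteq> J"
      using False card_subset_eq[OF sJ(4)] I J unfolding k_subsets_def by auto
    then obtain x where "x \<in> I" "x \<notin> J" by auto
    then obtain a where a: "a < k" "sorted_list_of_set I ! a \<notin> J"
      using sI(1,3) by (metis in_set_conv_nth)
    text \<open>Row \<open>a\<close> of the submatrix vanishes.\<close>
    have "det ?M = (\<Sum>p | p permutes {0..<k}. signof p * (\<Prod>i = 0..<k. ?M $$ (i, p i)))"
      by (rule det_def') auto
    also have "\<dots> = 0"
    proof (rule sum.neutral, clarify)
      fix p assume p: "p permutes {0..<k}"
      then have "p a < k" using permutes_in_image a by auto
      then have "?M $$ (a, p a) = 0"
        using a k_subsets_nth[OF J] k_subsets_nth(2)[OF I] by (auto simp: mat_diag_def)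
      then have "(\<Prod>i = 0..<k. ?M $$ (i, p i)) = 0" using a by (intro prod_zero) auto
      then show "signof p * (\<Prod>i = 0..<k. ?M $$ (i, p i)) = 0" by simp
    qed
    finally show ?thesis using False unfolding minor_def by simp
  qed
qed

lemma compound_mat_diag:
  fixes v :: "nat \<Rightarrow> 'a :: comm_ring_1"
  shows "compound_mat n k (mat_diag n v) =
    mat_diag (length (k_subset_list n k)) (\<lambda>i. \<Prod>x\<in>k_subset_list n k ! i. v x)"
proof (rule eq_matI)
  let ?L = "k_subset_list n k"
  fix i j assume "i < dim_row (mat_diag (length ?L) (\<lambda>i. \<Prod>x\<in>?L ! i. v x))"
    and "j < dim_col (mat_diag (length ?L) (\<lambda>i. \<Prod>x\<in>?L ! i. v x))"
  then have i: "i < length ?L" and j: "j < length ?L" by (auto simp: mat_diag_def)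
  then show "compound_mat n k (mat_diag n v) $$ (i,j) = mat_diag (length ?L) (\<lambda>i. \<Prod>x\<in>?L ! i. v x) $$ (i,j)"
    using minor_mat_diag[OF nth_k_subset_list[OF i] nth_k_subset_list[OF j], of v]
      distinct_k_subset_list[of n k]
    by (simp add: compound_mat_def mat_diag_def nth_eq_iff_index_eq)
qed (auto simp: compound_mat_def mat_diag_def)

lemma compound_mat_one: "compound_mat n k (1\<^sub>m n :: 'a :: comm_ring_1 mat) = 1\<^sub>m (length (k_subset_list n k))"
  using compound_mat_diag[of n k "\<lambda>_. 1 :: 'a"] by simp

lemma similar_mat_wit_compound_mat:
  fixes A :: "'a :: comm_ring_1 mat"
  assumes "similar_mat_wit A B P Q" and "A \<in> carrier_mat n n"
  shows "similar_mat_wit (compound_mat n k A) (compound_mat n k B) (compound_mat n k P) (compound_mat n k Q)"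
proof -
  from assms have car: "B \<in> carrier_mat n n" "P \<in> carrier_mat n n" "Q \<in> carrier_mat n n"
    and PQ: "P * Q = 1\<^sub>m n" "Q * P = 1\<^sub>m n" and A: "A = P * B * Q"
    unfolding similar_mat_wit_def by (auto simp: Let_def)
  have "compound_mat n k A = compound_mat n k P * compound_mat n k B * compound_mat n k Q"
    unfolding A by (simp add: compound_mat_mult[OF mult_carrier_mat[OF car(2,1)] car(3)]
        compound_mat_mult[OF car(2,1)])
  moreover have "compound_mat n k P * compound_mat n k Q = 1\<^sub>m (length (k_subset_list n k))"
    "compound_mat n k Q * compound_mat n k P = 1\<^sub>m (length (k_subset_list n k))"
    by (metis compound_mat_mult car(2,3) PQ compound_mat_one)+
  ultimately show ?thesis
    unfolding similar_mat_wit_def Let_def using compound_mat_carrier by auto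
qed

subsection \<open>Companion and Vandermonde matrices\<close>

definition companion_mat :: "'a :: field poly \<Rightarrow> 'a mat" where
  "companion_mat p = mat (degree p) (degree p) (\<lambda>(i,j).
     if Suc i < degree p then (if j = Suc i then 1 else 0) else - coeff p j / lead_coeff p)"

definition vandermonde_mat :: "'a :: comm_ring_1 list \<Rightarrow> 'a mat" where
  "vandermonde_mat xs = mat (length xs) (length xs) (\<lambda>(i,j). (xs ! j) ^ i)"

lemma companion_mat_vandermonde:
  fixes p :: "'a :: field poly"
  assumes deg: "degree p = length xs" and roots: "\<forall>x\<in>set xs. poly p x = 0"
  shows "companion_mat p * vandermonde_mat xs = vandermonde_mat xs * mat_diag (length xs) ((!) xs)"
proof (rule eq_matI)
  let ?d = "length xs"
  fix i j assume "i < dim_row (vandermonde_mat xs * mat_diag ?d ((!) xs))"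
    and "j < dim_col (vandermonde_mat xs * mat_diag ?d ((!) xs))"
  then have i: "i < ?d" and j: "j < ?d" by (auto simp: vandermonde_mat_def mat_diag_def)
  let ?x = "xs ! j"
  have rhs: "(vandermonde_mat xs * mat_diag ?d ((!) xs)) $$ (i,j) = ?x ^ Suc i"
    using i j by (simp add: mat_diag_mult_right[of _ ?d] vandermonde_mat_def)
  have lhs: "(companion_mat p * vandermonde_mat xs) $$ (i,j) =
      (\<Sum>l = 0..<?d. companion_mat p $$ (i,l) * ?x ^ l)"
    using i j deg by (simp add: vandermonde_mat_def companion_mat_def scalar_prod_def)
  show "(companion_mat p * vandermonde_mat xs) $$ (i,j) = (vandermonde_mat xs * mat_diag ?d ((!) xs)) $$ (i,j)"
  proof (cases "Suc i < ?d")
    case True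
    have "(\<Sum>l = 0..<?d. companion_mat p $$ (i,l) * ?x ^ l) = (\<Sum>l = 0..<?d. if l = Suc i then ?x ^ Suc i else 0)"
      using True deg by (intro sum.cong) (auto simp: companion_mat_def)
    with True show ?thesis unfolding lhs rhs by simp
  next
    case False
    with i have id: "Suc i = ?d" by simp
    then have "p \<noteq> 0" using deg by auto
    then have "lead_coeff p \<noteq> 0" by simp
    have "poly p ?x = 0" using j roots by auto
    then have "(\<Sum>l = 0..<Suc ?d. coeff p l * ?x ^ l) = 0"
      unfolding poly_altdef deg atLeast0AtMost[symmetric] atLeastLessThanSuc_atLeastAtMost .
    then have s: "(\<Sum>l = 0..<?d. coeff p l * ?x ^ l) = - lead_coeff p * ?x ^ ?d"
      using deg by (simp add: add_eq_0_iff)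
    have "(\<Sum>l = 0..<?d. companion_mat p $$ (i,l) * ?x ^ l) =
        (\<Sum>l = 0..<?d. - (coeff p l * ?x ^ l) / lead_coeff p)"
      using False i deg by (intro sum.cong) (auto simp: companion_mat_def)
    also have "\<dots> = ?x ^ ?d"
      unfolding sum_divide_distrib[symmetric] sum_negf s using \<open>lead_coeff p \<noteq> 0\<close> by simp
    finally show ?thesis unfolding lhs rhs id .
  qed
qed (use deg in \<open>auto simp: vandermonde_mat_def companion_mat_def mat_diag_def\<close>)

lemma det_vandermonde_mat_nonzero:
  fixes xs :: "'a :: field list"
  assumes "distinct xs"
  shows "det (vandermonde_mat xs) \<noteq> 0"
proof
  let ?n = "length xs"
  let ?V = "vandermonde_mat xs"
  have V: "?V \<in> carrier_mat ?n ?n" by (simp add: vandermonde_mat_def)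
  assume "det ?V = 0"
  then have "det (transpose_mat ?V) = 0" using det_transpose[OF V] by simp
  then obtain v where v: "v \<in> carrier_vec ?n" "v \<noteq> 0\<^sub>v ?n" "transpose_mat ?V *\<^sub>v v = 0\<^sub>v ?n"
    using det_0_iff_vec_prod_zero_field[of "transpose_mat ?V" ?n] V by auto
  text \<open>A nonzero polynomial of degree below \<open>n\<close> with the \<open>n\<close> distinct roots \<open>xs\<close>.\<close>
  define P where "P = (\<Sum>i\<in>{..<?n}. monom (v $ i) i)"
  have coeffP: "coeff P i = (if i < ?n then v $ i else 0)" for i
    unfolding P_def by (auto simp: coeff_sum coeff_monom)
  have "P \<noteq> 0"
  proof
    assume "P = 0"
    then have "v = 0\<^sub>v ?n" using coeffP v(1) by (intro eq_vecI) (auto, metis coeff_0)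
    with v(2) show False by simp
  qed
  have "poly P (xs ! j) = 0" if j: "j < ?n" for j
  proof -
    have "(transpose_mat ?V *\<^sub>v v) $ j = 0" using v(3) j by simp
    moreover have "(transpose_mat ?V *\<^sub>v v) $ j = (\<Sum>i = 0..<?n. (xs ! j) ^ i * v $ i)"
      using j v(1) by (simp add: vandermonde_mat_def scalar_prod_def)
    ultimately show ?thesis
      unfolding P_def by (simp add: poly_sum poly_monom lessThan_atLeast0 ac_simps)
  qed
  then have "set xs \<subseteq> {x. poly P x = 0}" by (auto simp: in_set_conv_nth)
  then have "?n \<le> card {x. poly P x = 0}"
    unfolding distinct_card[OF assms, symmetric] by (rule card_mono[OF poly_roots_finite[OF \<open>P \<noteq> 0\<close>]])
  also have "\<dots> \<le> degree P" by (rule card_poly_roots_bound[OF \<open>P \<noteq> 0\<close>])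
  finally have "?n \<le> degree P" .
  moreover have "degree P \<le> ?n - 1" by (rule degree_le) (auto simp: coeffP)
  moreover have "?n \<noteq> 0"
  proof
    assume "?n = 0"
    then have "P = 0" using coeffP by (simp add: poly_eq_iff)
    with \<open>P \<noteq> 0\<close> show False by simp
  qed
  ultimately show False by linarith
qed

lemma vandermonde_mat_invertible:
  fixes xs :: "'a :: field list"
  assumes "distinct xs"
  obtains W where "W \<in> carrier_mat (length xs) (length xs)"
    "vandermonde_mat xs * W = 1\<^sub>m (length xs)" "W * vandermonde_mat xs = 1\<^sub>m (length xs)"
proof -
  have V: "vandermonde_mat xs \<in> carrier_mat (length xs) (length xs)" by (simp add: vandermonde_mat_def)
  from det_non_zero_imp_unit[OF V det_vandermonde_mat_nonzero[OF assms], of "()"]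
  show ?thesis using that unfolding Units_def ring_mat_def by auto
qed

lemma char_poly_compound_companion_mat:
  fixes p :: "'a :: field poly"
  assumes deg: "degree p = length xs" and dist: "distinct xs" and roots: "\<forall>x\<in>set xs. poly p x = 0"
  shows "char_poly (c \<cdot>\<^sub>m compound_mat (degree p) k (companion_mat p)) =
    (\<Prod>K\<leftarrow>k_subset_list (degree p) k. [:- (c * (\<Prod>i\<in>K. xs ! i)), 1:])"
proof -
  let ?d = "length xs"
  let ?N = "length (k_subset_list ?d k)"
  let ?V = "vandermonde_mat xs"
  obtain W where W: "W \<in> carrier_mat ?d ?d" "?V * W = 1\<^sub>m ?d" "W * ?V = 1\<^sub>m ?d"
    using vandermonde_mat_invertible[OF dist] by blast
  have V: "?V \<in> carrier_mat ?d ?d" by (simp add: vandermonde_mat_def)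
  have C: "companion_mat p \<in> carrier_mat ?d ?d" by (simp add: companion_mat_def deg)
  have "companion_mat p = companion_mat p * (?V * W)" using W C by simp
  also have "\<dots> = ?V * mat_diag ?d ((!) xs) * W"
    using W C V by (simp add: companion_mat_vandermonde[OF deg roots, symmetric] assoc_mult_mat)
  finally have "similar_mat_wit (companion_mat p) (mat_diag ?d ((!) xs)) ?V W"
    unfolding similar_mat_wit_def Let_def using W V C by auto
  then have "similar_mat_wit (compound_mat ?d k (companion_mat p)) (compound_mat ?d k (mat_diag ?d ((!) xs)))
      (compound_mat ?d k ?V) (compound_mat ?d k W)"
    by (rule similar_mat_wit_compound_mat) (rule C)
  then have "similar_mat (c \<cdot>\<^sub>m compound_mat ?d k (companion_mat p))
      (c \<cdot>\<^sub>m mat_diag ?N (\<lambda>i. \<Prod>x\<in>k_subset_list ?d k ! i. xs ! x))"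
    unfolding compound_mat_diag by (intro similar_mat_smult) (auto simp: similar_mat_def)
  moreover have "c \<cdot>\<^sub>m mat_diag ?N (\<lambda>i. \<Prod>x\<in>k_subset_list ?d k ! i. xs ! x) =
      mat_diag ?N (\<lambda>i. c * (\<Prod>x\<in>k_subset_list ?d k ! i. xs ! x))"
    by (rule eq_matI) (auto simp: mat_diag_def)
  ultimately have "char_poly (c \<cdot>\<^sub>m compound_mat ?d k (companion_mat p)) =
      char_poly (mat_diag ?N (\<lambda>i. c * (\<Prod>x\<in>k_subset_list ?d k ! i. xs ! x)))"
    by (metis char_poly_similar)
  also have "\<dots> = (\<Prod>a\<leftarrow>diag_mat (mat_diag ?N (\<lambda>i. c * (\<Prod>x\<in>k_subset_list ?d k ! i. xs ! x))). [:- a, 1:])"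
    by (rule char_poly_upper_triangular[of _ ?N]) (auto simp: upper_triangular_def mat_diag_def)
  also have "diag_mat (mat_diag ?N (\<lambda>i. c * (\<Prod>x\<in>k_subset_list ?d k ! i. xs ! x))) =
      map (\<lambda>K. c * (\<Prod>i\<in>K. xs ! i)) (map ((!) (k_subset_list ?d k)) [0..<?N])"
    by (simp add: diag_mat_def mat_diag_def)
  also have "map ((!) (k_subset_list ?d k)) [0..<?N] = k_subset_list ?d k"
    by (rule map_nth)
  finally show ?thesis unfolding deg by (simp add: o_def)
qed

subsection \<open>Products of roots as eigenvalues of an integer matrix\<close>

text \<open>The companion matrix of an integer polynomial with the denominators of its
  last row cleared; only the last row involves the leading coefficient.\<close>
definition int_companion_mat :: "int poly \<Rightarrow> int mat" where
  "int_companion_mat p = mat (degree p) (degree p) (\<lambda>(i,j).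
     if Suc i < degree p then (if j = Suc i then 1 else 0) else - coeff p j)"

lemma lead_coeff_minor_companion_mat:
  fixes p :: "int poly"
  assumes I: "I \<in> k_subsets (degree p) k" and J: "J \<in> k_subsets (degree p) k"
  shows "of_int (lead_coeff p) * minor k (companion_mat (map_poly of_int p) :: complex mat) I J =
    of_int ((if degree p - 1 \<in> I then 1 else lead_coeff p) * minor k (int_companion_mat p) I J)"
proof -
  let ?d = "degree p" and ?a = "of_int (lead_coeff p) :: complex"
  let ?M = "mat k k (\<lambda>(a,b). (companion_mat (map_poly of_int p) :: complex mat)
     $$ (sorted_list_of_set I ! a, sorted_list_of_set J ! b))"
  let ?Mi = "mat k k (\<lambda>(a,b). int_companion_mat p $$ (sorted_list_of_set I ! a, sorted_list_of_set J ! b))"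
  have last_row: "Suc (sorted_list_of_set I ! a) < ?d" if "a < k" "sorted_list_of_set I ! a \<noteq> ?d - 1" for a
    using k_subsets_nth(2)[OF I that(1)] that(2) by linarith
  have entry: "?M $$ (a, b) = of_int (?Mi $$ (a, b))" if "a < k" "b < k" "sorted_list_of_set I ! a \<noteq> ?d - 1" for a b
    using that last_row k_subsets_nth(2)[OF I] k_subsets_nth(2)[OF J]
    by (simp add: companion_mat_def int_companion_mat_def)
  show ?thesis
  proof (cases "?d - 1 \<in> I")
    case False
    have "?M = map_mat of_int ?Mi"
    proof (rule eq_matI)
      fix a b assume "a < dim_row (map_mat of_int ?Mi :: complex mat)" "b < dim_col (map_mat of_int ?Mi :: complex mat)"
      then have a: "a < k" and b: "b < k" by auto
      then have "sorted_list_of_set I ! a \<noteq> ?d - 1" using k_subsets_nth(1)[OF I] False by metis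
      with a b entry show "?M $$ (a,b) = map_mat of_int ?Mi $$ (a,b)" by simp
    qed auto
    with False show ?thesis unfolding minor_def by (simp add: of_int_hom.hom_det)
  next
    case True
    then obtain a' where a': "a' < k" "sorted_list_of_set I ! a' = ?d - 1"
      using k_subsets_sorted_list(1,3)[OF I] by (metis in_set_conv_nth)
    text \<open>Multiplying the last row by the leading coefficient clears its denominators.\<close>
    have "multrow a' ?a ?M = map_mat of_int ?Mi"
    proof (rule eq_matI)
      fix a b assume "a < dim_row (map_mat of_int ?Mi :: complex mat)" "b < dim_col (map_mat of_int ?Mi :: complex mat)"
      then have a: "a < k" and b: "b < k" by auto
      show "multrow a' ?a ?M $$ (a,b) = map_mat of_int ?Mi $$ (a,b)"
      proof (cases "a = a'")
        case True
        have "?d > 0" using k_subsets_sorted_list(5)[OF I] \<open>?d - 1 \<in> I\<close> by auto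
        then have "lead_coeff p \<noteq> 0" by auto
        with True a b a' k_subsets_nth(2)[OF J b] show ?thesis
          by (simp add: companion_mat_def int_companion_mat_def)
      next
        case False
        then have "sorted_list_of_set I ! a \<noteq> ?d - 1"
          using a' a k_subsets_sorted_list(1,2)[OF I] nth_eq_iff_index_eq by metis
        with False a b entry show ?thesis by simp
      qed
    qed auto
    then have "?a * det ?M = det (map_mat of_int ?Mi)"
      using det_multrow[OF a'(1), of ?M ?a] by simp
    with True show ?thesis unfolding minor_def by (simp add: of_int_hom.hom_det)
  qed
qed

definition scaled_compound_int_mat :: "int poly \<Rightarrow> nat \<Rightarrow> int \<Rightarrow> int mat" where
  "scaled_compound_int_mat p k s =
     (let L = k_subset_list (degree p) k in mat (length L) (length L) (\<lambda>(i,j).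
       s * (if degree p - 1 \<in> L ! i then 1 else lead_coeff p) * minor k (int_companion_mat p) (L ! i) (L ! j)))"

lemma scaled_compound_int_mat_carrier:
  "scaled_compound_int_mat p k s \<in> carrier_mat (length (k_subset_list (degree p) k)) (length (k_subset_list (degree p) k))"
  unfolding scaled_compound_int_mat_def by (simp add: Let_def)

lemma of_int_scaled_compound_int_mat:
  "map_mat of_int (scaled_compound_int_mat p k s) =
    (of_int (s * lead_coeff p) :: complex) \<cdot>\<^sub>m compound_mat (degree p) k (companion_mat (map_poly of_int p))"
  using lead_coeff_minor_companion_mat[OF nth_k_subset_list nth_k_subset_list]
  by (intro eq_matI) (auto simp: scaled_compound_int_mat_def compound_mat_def Let_def ac_simps)

lemma char_poly_scaled_compound_int_mat:
  fixes p :: "int poly"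
  assumes deg: "degree p = length xs" and dist: "distinct xs"
    and roots: "\<forall>x\<in>set xs. poly (map_poly of_int p) x = 0"
  shows "lead_coeff (char_poly (scaled_compound_int_mat p k s)) = 1"
    "poly (map_poly of_int (char_poly (scaled_compound_int_mat p k s))) z = (0::complex) \<longleftrightarrow>
      (\<exists>K\<in>k_subsets (degree p) k. z = of_int (s * lead_coeff p) * (\<Prod>i\<in>K. xs ! i))"
proof -
  let ?B = "scaled_compound_int_mat p k s" and ?c = "of_int (s * lead_coeff p) :: complex"
  show "lead_coeff (char_poly ?B) = 1"
    using degree_monic_char_poly[OF scaled_compound_int_mat_carrier] by simp
  have "map_poly of_int (char_poly ?B) = char_poly (map_mat (of_int :: int \<Rightarrow> complex) ?B)"
    by (rule of_int_hom.char_poly_hom[OF scaled_compound_int_mat_carrier, symmetric])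
  also have "\<dots> = (\<Prod>K\<leftarrow>k_subset_list (degree p) k. [:- (?c * (\<Prod>i\<in>K. xs ! i)), 1:])"
    unfolding of_int_scaled_compound_int_mat
    using char_poly_compound_companion_mat[of "map_poly of_int p" xs ?c k] deg dist roots by simp
  moreover have "poly (\<Prod>K\<leftarrow>Ks. [:- f K, 1:]) z = 0 \<longleftrightarrow> (\<exists>K\<in>set Ks. z = f K)"
    for Ks and f :: "nat set \<Rightarrow> complex"
    by (induction Ks) auto
  ultimately show "poly (map_poly of_int (char_poly ?B)) z = 0 \<longleftrightarrow>
      (\<exists>K\<in>k_subsets (degree p) k. z = ?c * (\<Prod>i\<in>K. xs ! i))"
    by (simp only: set_k_subset_list)
qed

subsection \<open>The minimal polynomial\<close>

lemma algebraic_imp_int_poly_root: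
  assumes "algebraic (x :: complex)"
  obtains q :: "int poly" where "q \<noteq> 0" "poly (map_poly of_int q) x = 0"
proof -
  from algebraicE[OF assms] obtain p where p: "\<And>i. coeff p i \<in> \<int>" "p \<noteq> 0" "poly p x = 0" by blast
  define to_int where "to_int y = (THE r. y = of_int r)" for y :: complex
  have of_int_to_int: "of_int (to_int y) = y" if "y \<in> \<int>" for y
    unfolding to_int_def by (rule sym, rule theI') (use that in \<open>auto simp: Ints_def\<close>)
  have "to_int 0 = 0" using of_int_to_int[of 0] by simp
  then have "map_poly of_int (map_poly to_int p) = p"
    using p(1) of_int_to_int by (subst poly_eq_iff) (auto simp: coeff_map_poly)
  with p(2,3) show thesis by (intro that[of "map_poly to_int p"]) auto
qed

lemma poly_of_int_normalize_eq_0_iff: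
  "poly (map_poly of_int (normalize r)) (x :: complex) = 0 \<longleftrightarrow> poly (map_poly of_int r) x = 0"
proof -
  have "map_poly (of_int :: int \<Rightarrow> complex) r =
      map_poly of_int (unit_factor r) * map_poly of_int (normalize r)"
    by (metis of_int_poly_hom.hom_mult unit_factor_mult_normalize)
  moreover have "poly (map_poly (of_int :: int \<Rightarrow> complex) (unit_factor r)) x \<noteq> 0" if "r \<noteq> 0"
    using that by (simp add: unit_factor_poly_def sgn_0_0)
  ultimately show ?thesis by (cases "r = 0") auto
qed

lemma irreducible_int_poly_root_exists:
  assumes "q \<noteq> 0" and "poly (map_poly of_int q) (x :: complex) = 0"
  shows "\<exists>f. irreducible f \<and> lead_coeff f > 0 \<and> poly (map_poly of_int f) x = 0"
proof -
  have "poly (map_poly of_int (prod_mset (prime_factorization q))) x = 0"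
    using assms(2) prod_mset_prime_factorization_weak[OF assms(1)]
    by (metis poly_of_int_normalize_eq_0_iff)
  moreover have "poly (map_poly of_int (prod_mset M)) x = (\<Prod>f\<in>#M. poly (map_poly of_int f) x)"
    for M :: "int poly multiset"
    by (induction M) (simp_all add: of_int_poly_hom.hom_mult)
  ultimately obtain f where f: "f \<in> prime_factors q" "poly (map_poly of_int f) x = 0"
    by (auto simp: prod_mset_zero_iff)
  then have "prime f" by auto
  then have "unit_factor f = 1"
    using unit_factor_normalize[of f] normalize_prime[of f] by (metis not_prime_0)
  then have "lead_coeff f > 0"
    by (simp add: unit_factor_poly_def sgn_1_pos)
  with \<open>prime f\<close> f(2) show ?thesis by (auto simp: prime_elem_iff_irreducible)
qed

lemma irreducible_rat_poly_dvd_of_common_root: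
  fixes P Q :: "rat poly" and x :: complex
  assumes "irreducible P" and "poly (map_poly of_rat P) x = 0" and "poly (map_poly of_rat Q) x = 0"
  shows "P dvd Q"
proof (rule ccontr)
  assume "\<not> P dvd Q"
  moreover have "prime_elem P" using assms(1) by (simp add: prime_elem_iff_irreducible)
  ultimately have "coprime P Q" by (simp add: prime_elem_imp_coprime)
  then have "gcd P Q = 1" by (simp add: coprime_iff_gcd_eq_1)
  then have "fst (bezout_coefficients P Q) * P + snd (bezout_coefficients P Q) * Q = 1"
    by (simp add: bezout_coefficients_fst_snd)
  then have "poly (map_poly (of_rat :: rat \<Rightarrow> complex)
      (fst (bezout_coefficients P Q) * P + snd (bezout_coefficients P Q) * Q)) x = 1"
    by simp
  interpret of_rat_poly_hom: map_poly_comm_ring_hom "of_rat :: rat \<Rightarrow> complex" ..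
  from \<open>poly _ x = 1\<close> assms(2,3) show False
    by (simp add: of_rat_poly_hom.hom_add of_rat_poly_hom.hom_mult)
qed

lemma irreducible_int_poly_root:
  fixes p :: "int poly" and x :: complex
  assumes irr: "irreducible p" and px: "poly (map_poly of_int p) x = 0"
  shows "degree p \<noteq> 0" and "content p = 1" and "irreducible (map_poly rat_of_int p)"
proof -
  show deg: "degree p \<noteq> 0"
  proof
    assume "degree p = 0"
    then obtain c where "p = [:c:]" by (elim degree_eq_zeroE)
    moreover from this irr have "c \<noteq> 0" by auto
    ultimately show False using px by simp
  qed
  have prim: "primitive p" by (rule irreducible_imp_primitive[OF irr deg])
  then show "content p = 1" by simp
  have "irreducible\<^sub>d p" using irreducible_primitive_connect[OF prim] irr by simp
  then show "irreducible (map_poly rat_of_int p)"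
    using irreducible\<^sub>d_int_rat by simp
qed

lemma irreducible_int_poly_dvd_of_common_root:
  fixes p q :: "int poly" and x :: complex
  assumes irr: "irreducible p" and px: "poly (map_poly of_int p) x = 0"
    and qx: "poly (map_poly of_int q) x = 0"
  shows "p dvd q"
proof -
  note p = irreducible_int_poly_root[OF irr px]
  have "map_poly rat_of_int p dvd map_poly rat_of_int q"
    using px qx by (intro irreducible_rat_poly_dvd_of_common_root[OF p(3), of x])
      (simp_all add: map_poly_map_poly o_def)
  then show ?thesis using dvd_poly_int_content_1[OF p(2)] by simp
qed

lemma rsquarefree_irreducible_int_poly:
  fixes p :: "int poly" and x :: complex
  assumes irr: "irreducible p" and px: "poly (map_poly of_int p) x = 0"
  shows "rsquarefree (map_poly (of_int :: int \<Rightarrow> complex) p)"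
  unfolding rsquarefree_roots
proof (intro allI notI)
  note p = irreducible_int_poly_root[OF irr px]
  let ?P = "map_poly rat_of_int p"
  have id: "map_poly (of_int :: int \<Rightarrow> complex) p = map_poly of_rat ?P"
    by (simp add: map_poly_map_poly o_def)
  fix a assume "poly (map_poly (of_int :: int \<Rightarrow> complex) p) a = 0 \<and> poly (pderiv (map_poly of_int p)) a = 0"
  then have "?P dvd pderiv ?P"
    unfolding id by (intro irreducible_rat_poly_dvd_of_common_root[OF p(3), of a])
      (auto simp: of_rat_hom.map_poly_pderiv)
  moreover have "pderiv ?P \<noteq> 0" using p(1) by (simp add: pderiv_eq_0_iff)
  ultimately have "degree ?P \<le> degree (pderiv ?P)" by (rule dvd_imp_degree_le)
  with p(1) show False by (simp add: degree_pderiv)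
qed

lemma normalize_int_poly_pos:
  assumes "lead_coeff (f :: int poly) > 0"
  shows "normalize f = f"
proof -
  have "unit_factor f = 1" using assms by (simp add: unit_factor_poly_def)
  then show ?thesis using unit_factor_mult_normalize[of f] by simp
qed

lemma min_int_poly:
  assumes "algebraic x"
  shows "irreducible (min_int_poly x)" and "lead_coeff (min_int_poly x) > 0"
    and "poly (map_poly of_int (min_int_poly x)) x = 0"
proof -
  obtain q where "q \<noteq> 0" "poly (map_poly of_int q) x = 0"
    using algebraic_imp_int_poly_root[OF assms] .
  from irreducible_int_poly_root_exists[OF this] obtain f where
    f: "irreducible f \<and> lead_coeff f > 0 \<and> poly (map_poly of_int f) x = 0" by blast
  have unique: "g = f" if g: "irreducible g \<and> lead_coeff g > 0 \<and> poly (map_poly of_int g) x = 0" for g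
  proof -
    from g have "g dvd f" using f by (intro irreducible_int_poly_dvd_of_common_root[of g x]) auto
    moreover from f have "f dvd g" using g by (intro irreducible_int_poly_dvd_of_common_root[of f x]) auto
    moreover have "normalize g = g" using g by (intro normalize_int_poly_pos) simp
    moreover have "normalize f = f" using f by (intro normalize_int_poly_pos) simp
    ultimately show ?thesis by (rule associated_eqI)
  qed
  have "min_int_poly x = f"
    unfolding min_int_poly_def using f unique by (rule the_equality)
  with f show "irreducible (min_int_poly x)" "lead_coeff (min_int_poly x) > 0"
    "poly (map_poly of_int (min_int_poly x)) x = 0" by blast+
qed

definition conjugates :: "complex \<Rightarrow> complex set" where
  "conjugates x = {z. poly (map_poly of_int (min_int_poly x)) z = 0}"

lemma cnj_in_conjugates:
  assumes "z \<in> conjugates x"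
  shows "cnj z \<in> conjugates x"
proof -
  have "poly (map_poly of_int p) (cnj z) = cnj (poly (map_poly of_int p) z)" for p :: "int poly"
    by (simp add: poly_altdef cnj_sum)
  with assms show ?thesis by (simp add: conjugates_def)
qed

lemma weil_height_conjugates:
  "weil_height x = root (degree (min_int_poly x))
     (of_int (lead_coeff (min_int_poly x)) * (\<Prod>z\<in>conjugates x. max 1 (cmod z)))"
  by (simp add: weil_height_def conjugates_def Let_def)

lemma conjugates_min_int_poly:
  assumes "algebraic x"
  shows "finite (conjugates x)" and "card (conjugates x) = degree (min_int_poly x)"
    and "degree (min_int_poly x) > 0"
    and "map_poly of_int (min_int_poly x) =
      Polynomial.smult (of_int (lead_coeff (min_int_poly x))) (\<Prod>z\<in>conjugates x. [:-z,1:])"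
proof -
  define P where "P = min_int_poly x"
  note P = min_int_poly[OF assms(1), folded P_def]
  show "degree (min_int_poly x) > 0" using irreducible_int_poly_root(1)[OF P(1,3)] by (simp add: P_def)
  have "map_poly (of_int :: int \<Rightarrow> complex) P \<noteq> 0" using P(1) by auto
  then show "finite (conjugates x)" unfolding conjugates_def P_def[symmetric] by (rule poly_roots_finite)
  have dec: "map_poly of_int P = Polynomial.smult (of_int (lead_coeff P)) (\<Prod>z\<in>conjugates x. [:-z,1:])"
    using complex_poly_decompose_rsquarefree[OF rsquarefree_irreducible_int_poly[OF P(1,3)]]
    unfolding conjugates_def P_def[symmetric] by simp
  then show "map_poly of_int (min_int_poly x) =
      Polynomial.smult (of_int (lead_coeff (min_int_poly x))) (\<Prod>z\<in>conjugates x. [:-z,1:])"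
    by (simp only: P_def)
  have "degree P = degree (map_poly (of_int :: int \<Rightarrow> complex) P)" by simp
  also have "\<dots> = degree (\<Prod>z\<in>conjugates x. [:-z,1:])"
    using P(2) by (simp only: dec degree_smult_eq of_int_eq_0_iff) auto
  also have "\<dots> = card (conjugates x)" by (subst degree_prod_sum_eq) auto
  finally show "card (conjugates x) = degree (min_int_poly x)" by (simp add: P_def)
qed

lemma algebraic_of_int_poly_root:
  assumes "lead_coeff q = 1" and "poly (map_poly of_int q) (x :: complex) = 0"
  shows "algebraic x"
  using assms by (intro algebraicI[of "map_poly of_int q"]) auto

lemma conjugates_of_monic_root:
  assumes monic: "lead_coeff Q = 1" and Qx: "poly (map_poly of_int Q) (x :: complex) = 0"
  shows "lead_coeff (min_int_poly x) = 1"
    and "conjugates x \<subseteq> {z. poly (map_poly of_int Q) z = 0}"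
    and "weil_height x = root (card (conjugates x)) (\<Prod>z\<in>conjugates x. max 1 (cmod z))"
proof -
  have alg: "algebraic x" by (rule algebraic_of_int_poly_root[OF monic Qx])
  note P = min_int_poly[OF alg]
  have "min_int_poly x dvd Q" by (rule irreducible_int_poly_dvd_of_common_root[OF P(1,3) Qx])
  then obtain h where Qh: "Q = min_int_poly x * h" by (elim dvdE)
  have "lead_coeff (min_int_poly x) * lead_coeff h = 1" using monic Qh by (simp add: lead_coeff_mult)
  then show lP: "lead_coeff (min_int_poly x) = 1" using P(2) pos_zmult_eq_1_iff by blast
  show "conjugates x \<subseteq> {z. poly (map_poly of_int Q) z = 0}"
    unfolding conjugates_def Qh of_int_poly_hom.hom_mult by auto
  show "weil_height x = root (card (conjugates x)) (\<Prod>z\<in>conjugates x. max 1 (cmod z))"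
    unfolding weil_height_conjugates lP conjugates_min_int_poly(2)[OF alg] by simp
qed

subsection \<open>Heights of real algebraic integers dominating their conjugates\<close>

lemma weil_height_le_of_monic_root_bound:
  fixes \<beta> :: real
  assumes "\<beta> \<ge> 1" and "lead_coeff Q = 1" and "poly (map_poly of_int Q) (complex_of_real \<beta>) = 0"
    and bound: "\<And>z. poly (map_poly of_int Q) z = 0 \<Longrightarrow> cmod z \<le> \<beta>"
  shows "weil_height (complex_of_real \<beta>) \<le> \<beta>"
proof -
  let ?R = "conjugates (complex_of_real \<beta>)"
  have alg: "algebraic (complex_of_real \<beta>)" by (rule algebraic_of_int_poly_root[OF assms(2,3)])
  note H = conjugates_of_monic_root[OF assms(2,3)]
  have n: "card ?R > 0" using conjugates_min_int_poly(2,3)[OF alg] by simp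
  have "(\<Prod>z\<in>?R. max 1 (cmod z)) \<le> \<beta> ^ card ?R"
    using H(2) bound \<open>\<beta> \<ge> 1\<close> by (intro prod_le_power) auto
  then have "root (card ?R) (\<Prod>z\<in>?R. max 1 (cmod z)) \<le> root (card ?R) (\<beta> ^ card ?R)"
    using n by (simp add: real_root_le_iff)
  also have "\<dots> = \<beta>" using n \<open>\<beta> \<ge> 1\<close> by (simp add: real_root_pos2)
  finally show ?thesis unfolding H(3) .
qed

lemma norm_conjugates_of_weil_height_eq:
  fixes \<beta> :: real
  assumes "\<beta> > 1" and "lead_coeff Q = 1" and "poly (map_poly of_int Q) (complex_of_real \<beta>) = 0"
    and bound: "\<And>z. poly (map_poly of_int Q) z = 0 \<Longrightarrow> cmod z \<le> \<beta>"
    and eq: "weil_height (complex_of_real \<beta>) = \<beta>"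
    and z: "z \<in> conjugates (complex_of_real \<beta>)"
  shows "cmod z = \<beta>"
proof (rule ccontr)
  let ?R = "conjugates (complex_of_real \<beta>)"
  note H = conjugates_of_monic_root[OF assms(2,3)]
    and C = conjugates_min_int_poly[OF algebraic_of_int_poly_root[OF assms(2,3)]]
  have le: "max 1 (cmod w) \<le> \<beta>" if "w \<in> ?R" for w
    using H(2) bound that \<open>\<beta> > 1\<close> by force
  assume "cmod z \<noteq> \<beta>"
  with le[OF z] \<open>\<beta> > 1\<close> have "max 1 (cmod z) < \<beta>" by auto
  then have "(\<Prod>w\<in>?R. max 1 (cmod w)) < (\<Prod>w\<in>?R. \<beta>)"
    using z C(1) le \<open>\<beta> > 1\<close> by (intro prod_mono_strict) auto
  also have "\<dots> = root (card ?R) (\<Prod>w\<in>?R. max 1 (cmod w)) ^ card ?R"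
    using eq H(3) by simp
  also have "\<dots> = (\<Prod>w\<in>?R. max 1 (cmod w))"
    using C(2,3) by (simp add: prod_nonneg real_root_pow_pos2)
  finally show False by simp
qed

text \<open>If all conjugates have modulus \<open>\<beta>\<close>, then \<open>\<beta>\<^sup>e\<close> is the absolute value of the
  constant coefficient of the minimal polynomial.\<close>
lemma rational_power_of_norm_conjugates:
  fixes \<beta> :: real
  assumes "\<beta> \<ge> 1" and monic: "lead_coeff Q = 1" and Q\<beta>: "poly (map_poly of_int Q) (complex_of_real \<beta>) = 0"
    and on_circle: "\<And>z. z \<in> conjugates (complex_of_real \<beta>) \<Longrightarrow> cmod z = \<beta>"
  shows "\<exists>a::nat. \<exists>b::rat. b > 0 \<and> \<beta> = real a powr real_of_rat b"
proof -
  define P where "P = min_int_poly (complex_of_real \<beta>)"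
  define R where "R = conjugates (complex_of_real \<beta>)"
  define e where "e = card R"
  have alg: "algebraic (complex_of_real \<beta>)" by (rule algebraic_of_int_poly_root[OF monic Q\<beta>])
  note C = conjugates_min_int_poly[OF alg, folded P_def R_def]
  have "e > 0" using C(2,3) by (simp add: e_def)
  have factor: "map_poly of_int P = (\<Prod>z\<in>R. [:-z,1:])"
    using C(4) conjugates_of_monic_root(1)[OF monic Q\<beta>] by (simp add: P_def)
  have "of_int (coeff P 0) = poly (map_poly (of_int :: int \<Rightarrow> complex) P) 0"
    by (simp add: poly_0_coeff_0)
  also have "\<dots> = (\<Prod>z\<in>R. - z)" unfolding factor by (simp add: poly_prod)
  finally have c0: "of_int (coeff P 0) = (\<Prod>z\<in>R. - z)" .
  have "real (nat \<bar>coeff P 0\<bar>) = cmod (of_int (coeff P 0))" by simp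
  also have "\<dots> = (\<Prod>z\<in>R. cmod z)" unfolding c0 prod_norm[symmetric] by simp
  also have "\<dots> = \<beta> ^ e" using on_circle by (simp add: R_def e_def)
  finally have norm_const: "real (nat \<bar>coeff P 0\<bar>) = \<beta> ^ e" .
  have "\<beta> = root e (\<beta> ^ e)" using \<open>e > 0\<close> \<open>\<beta> \<ge> 1\<close> by (simp add: real_root_pos2)
  also have "\<dots> = real (nat \<bar>coeff P 0\<bar>) powr (1 / real e)"
    unfolding norm_const[symmetric] using \<open>e > 0\<close> by (simp add: root_powr_inverse)
  finally have "\<beta> = real (nat \<bar>coeff P 0\<bar>) powr real_of_rat (1 / of_nat e)"
    by (simp add: of_rat_divide)
  moreover have "(1 / of_nat e :: rat) > 0" using \<open>e > 0\<close> by simp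
  ultimately show ?thesis by blast
qed

lemma rational_power_of_weil_height_eq:
  fixes \<beta> :: real
  assumes "\<beta> \<ge> 1" and "lead_coeff Q = 1" and "poly (map_poly of_int Q) (complex_of_real \<beta>) = 0"
    and "\<And>z. poly (map_poly of_int Q) z = 0 \<Longrightarrow> cmod z \<le> \<beta>"
    and "weil_height (complex_of_real \<beta>) = \<beta>"
  shows "\<exists>a::nat. \<exists>b::rat. b > 0 \<and> \<beta> = real a powr real_of_rat b"
proof (cases "\<beta> = 1")
  case True
  then show ?thesis by (intro exI[of _ 1]) simp
next
  case False
  with assms(1) have "\<beta> > 1" by simp
  from norm_conjugates_of_weil_height_eq[OF this assms(2-5)] show ?thesis
    by (rule rational_power_of_norm_conjugates[OF assms(1-3)])
qed

lemma weil_height_of_norm_conjugates: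
  fixes \<beta> :: real
  assumes "\<beta> \<ge> 1" and "lead_coeff Q = 1" and "poly (map_poly of_int Q) (complex_of_real \<beta>) = 0"
    and on_circle: "\<And>z. z \<in> conjugates (complex_of_real \<beta>) \<Longrightarrow> cmod z = \<beta>"
  shows "weil_height (complex_of_real \<beta>) = \<beta>"
proof -
  let ?R = "conjugates (complex_of_real \<beta>)"
  note C = conjugates_min_int_poly(2,3)[OF algebraic_of_int_poly_root[OF assms(2,3)]]
  have "weil_height (complex_of_real \<beta>) = root (card ?R) (\<Prod>z\<in>?R. \<beta>)"
    unfolding conjugates_of_monic_root(3)[OF assms(2,3)] using on_circle assms(1)
    by (intro arg_cong[where f = "root _"] prod.cong) auto
  also have "\<dots> = \<beta>" using C assms(1) by (simp add: real_root_pos2)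
  finally show ?thesis .
qed

lemma rational_power_root_of_monic:
  fixes \<beta> :: real
  assumes "\<beta> \<ge> 1" and "\<beta> = real a powr real_of_rat b" and "b > 0"
  obtains Q where "lead_coeff Q = 1" and "poly (map_poly of_int Q) (complex_of_real \<beta>) = 0"
    and "\<And>z. poly (map_poly of_int Q) z = 0 \<Longrightarrow> cmod z = \<beta>"
proof -
  obtain r t where rt: "quotient_of b = (r, t)" by (cases "quotient_of b")
  have "t > 0" by (rule quotient_of_denom_pos[OF rt])
  moreover have "b = of_int r / of_int t" by (rule quotient_of_div[OF rt])
  ultimately have "r > 0" using \<open>b > 0\<close> by (simp add: zero_less_divide_iff)
  have "a > 0"
  proof (rule ccontr)
    assume "\<not> a > 0"
    then have "\<beta> = 0" using assms(2) by simp
    with assms(1) show False by simp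
  qed
  have pow: "\<beta> ^ nat t = real a ^ nat r"
  proof -
    have "\<beta> ^ nat t = \<beta> powr nat t" using assms(1) by (simp add: powr_realpow)
    also have "\<dots> = real a powr (real_of_rat b * nat t)" unfolding assms(2) by (simp add: powr_powr)
    also have "real_of_rat b * nat t = nat r"
      using \<open>b = of_int r / of_int t\<close> \<open>t > 0\<close> \<open>r > 0\<close> by (simp add: of_rat_divide)
    finally show ?thesis using \<open>a > 0\<close> by (simp add: powr_realpow)
  qed
  define Q :: "int poly" where "Q = monom 1 (nat t) + monom (- (int a ^ nat r)) 0"
  have deg: "degree Q = nat t"
    unfolding Q_def using \<open>t > 0\<close> by (simp add: degree_add_eq_left degree_monom_eq)
  have poly_Q: "poly (map_poly of_int Q) z = z ^ nat t - of_nat a ^ nat r" for z :: complex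
    unfolding Q_def by (simp add: of_int_poly_hom.hom_add poly_monom map_poly_monom)
  show thesis
  proof (rule that[of Q])
    show "lead_coeff Q = 1"
      unfolding deg unfolding Q_def coeff_add using \<open>t > 0\<close> by (simp add: coeff_monom)
    show "poly (map_poly of_int Q) (complex_of_real \<beta>) = 0"
      unfolding poly_Q using pow by (metis of_real_of_nat_eq of_real_power right_minus_eq)
    fix z :: complex assume "poly (map_poly of_int Q) z = 0"
    then have "z ^ nat t = of_nat a ^ nat r" unfolding poly_Q right_minus_eq .
    then have "cmod z ^ nat t = real a ^ nat r" by (metis norm_power norm_of_nat)
    then have "cmod z ^ nat t = \<beta> ^ nat t" by (simp only: pow)
    then show "cmod z = \<beta>" by (rule power_eq_imp_eq_base) (use \<open>t > 0\<close> \<open>\<beta> \<ge> 1\<close> in auto)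
  qed
qed

lemma weil_height_rational_power:
  fixes \<beta> :: real
  assumes "\<beta> \<ge> 1" and "\<beta> = real a powr real_of_rat b" and "b > 0"
  shows "weil_height (complex_of_real \<beta>) = \<beta>"
proof -
  obtain Q where Q: "lead_coeff Q = 1" "poly (map_poly of_int Q) (complex_of_real \<beta>) = 0"
    and on_circle: "\<And>z. poly (map_poly of_int Q) z = 0 \<Longrightarrow> cmod z = \<beta>"
    using rational_power_root_of_monic[OF assms] by blast
  show ?thesis
    using conjugates_of_monic_root(2)[OF Q] on_circle
    by (intro weil_height_of_norm_conjugates[OF assms(1) Q]) auto
qed

subsection \<open>The Mahler measure is a root of a monic integer polynomial\<close>

lemma prod_in_Reals_of_cnj_closed:
  assumes "\<And>z. z \<in> S \<Longrightarrow> cnj z \<in> S"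
  shows "(\<Prod>z\<in>S. z) \<in> \<real>"
proof -
  have "cnj ` S = S" using assms by (force intro: image_eqI[of _ cnj "cnj _"])
  have "cnj (\<Prod>z\<in>S. z) = (\<Prod>z\<in>S. cnj z)" by (simp add: cnj_prod)
  also have "\<dots> = (\<Prod>z\<in>cnj ` S. z)" by (simp add: prod.reindex inj_on_def)
  finally show ?thesis unfolding \<open>cnj ` S = S\<close> by (simp add: Reals_cnj_iff)
qed

lemma prod_max_one_norm_eq:
  fixes f :: "'a \<Rightarrow> 'b :: real_normed_vector"
  assumes "finite A"
  shows "(\<Prod>i\<in>A. max 1 (norm (f i))) = (\<Prod>i\<in>{i\<in>A. 1 < norm (f i)}. norm (f i))"
  using assms by (intro prod.mono_neutral_cong_right) auto

lemma prod_norm_le_prod_max_one: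
  fixes f :: "'a \<Rightarrow> 'b :: real_normed_vector"
  assumes "finite A" and "K \<subseteq> A"
  shows "(\<Prod>i\<in>K. norm (f i)) \<le> (\<Prod>i\<in>A. max 1 (norm (f i)))"
proof -
  have "(\<Prod>i\<in>K. norm (f i)) \<le> (\<Prod>i\<in>K. max 1 (norm (f i)))"
    by (intro prod_mono) auto
  also have "\<dots> \<le> (\<Prod>i\<in>A. max 1 (norm (f i)))"
    using assms by (intro prod_mono2) auto
  finally show ?thesis .
qed

text \<open>The Mahler measure \<open>a\<^sub>0 \<Prod> max 1 |z|\<close> equals \<open>|a\<^sub>0 \<Prod>\<^sub>z\<^sub>\<in>\<^sub>S z|\<close>
  for the set \<open>S\<close> of conjugates outside the unit circle, and \<open>a\<^sub>0 \<Prod>\<^sub>z\<^sub>\<in>\<^sub>S z\<close> is real since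
  \<open>S\<close> is closed under conjugation. Among the \<open>|S|\<close>-fold products of conjugates, which are
  the roots of the characteristic polynomial of a scaled compound matrix, it has the
  largest modulus.\<close>
lemma mahler_measure_root_of_monic:
  assumes "algebraic \<alpha>"
  defines "M \<equiv> of_int (lead_coeff (min_int_poly \<alpha>)) * (\<Prod>z\<in>conjugates \<alpha>. max 1 (cmod z))"
  obtains Ps where "lead_coeff Ps = 1" and "poly (map_poly of_int Ps) (complex_of_real M) = 0"
    and "\<And>w. poly (map_poly of_int Ps) w = 0 \<Longrightarrow> cmod w \<le> M"
proof -
  define P where "P = min_int_poly \<alpha>"
  note C = conjugates_min_int_poly[OF assms(1), folded P_def]
  have a0: "lead_coeff P > 0" using min_int_poly(2)[OF assms(1)] by (simp add: P_def)
  obtain xs where xs: "set xs = conjugates \<alpha>" "distinct xs" using finite_distinct_list[OF C(1)] by blast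
  have deg: "degree P = length xs" using C(2) xs distinct_card by metis
  have roots: "\<forall>x\<in>set xs. poly (map_poly of_int P) x = 0" using xs(1) by (simp add: conjugates_def P_def)
  have bij: "bij_betw ((!) xs) {0..<degree P} (conjugates \<alpha>)"
    using bij_betw_nth[OF xs(2)] xs(1) deg by (simp add: lessThan_atLeast0)
  define K where "K = {i\<in>{0..<degree P}. 1 < cmod (xs ! i)}"
  have "K \<in> k_subsets (degree P) (card K)" by (auto simp: k_subsets_def K_def)
  have M_K: "M = of_int (lead_coeff P) * (\<Prod>i\<in>K. cmod (xs ! i))"
    unfolding M_def P_def[symmetric] prod.reindex_bij_betw[OF bij, symmetric]
    unfolding K_def by (simp add: prod_max_one_norm_eq)
  have "bij_betw ((!) xs) K {z\<in>conjugates \<alpha>. 1 < cmod z}"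
    unfolding K_def by (rule bij_betw_Collect[OF bij]) simp
  then have "(\<Prod>i\<in>K. xs ! i) = (\<Prod>z\<in>{z\<in>conjugates \<alpha>. 1 < cmod z}. z)"
    by (rule prod.reindex_bij_betw)
  also have "\<dots> \<in> \<real>"
    by (rule prod_in_Reals_of_cnj_closed) (auto intro: cnj_in_conjugates)
  finally obtain r where r: "(\<Prod>i\<in>K. xs ! i) = complex_of_real r" by (auto elim: Reals_cases)
  define s :: int where "s = (if r \<ge> 0 then 1 else -1)"
  have "M = of_int (lead_coeff P) * \<bar>r\<bar>"
    unfolding M_K prod_norm r by simp
  then have root: "complex_of_real M = of_int (s * lead_coeff P) * (\<Prod>i\<in>K. xs ! i)"
    unfolding r s_def by (simp add: complex_eq_iff)
  define Ps where "Ps = char_poly (scaled_compound_int_mat P (card K) s)"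
  note Ps = char_poly_scaled_compound_int_mat[OF deg xs(2) roots, of "card K" s, folded Ps_def]
  show thesis
  proof (rule that[of Ps])
    show "lead_coeff Ps = 1" by (rule Ps(1))
    show "poly (map_poly of_int Ps) (complex_of_real M) = 0"
      unfolding Ps(2) root using \<open>K \<in> k_subsets (degree P) (card K)\<close> by blast
    fix w :: complex assume "poly (map_poly of_int Ps) w = 0"
    then obtain K' where K': "K' \<in> k_subsets (degree P) (card K)"
      and w: "w = of_int (s * lead_coeff P) * (\<Prod>i\<in>K'. xs ! i)" unfolding Ps(2) by blast
    have "cmod w = of_int (lead_coeff P) * (\<Prod>i\<in>K'. cmod (xs ! i))"
      unfolding w using a0 by (simp add: norm_mult prod_norm[symmetric] s_def)
    also have "\<dots> \<le> of_int (lead_coeff P) * (\<Prod>i\<in>{0..<degree P}. max 1 (cmod (xs ! i)))"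
      using K' a0 by (intro mult_left_mono prod_norm_le_prod_max_one) (auto simp: k_subsets_def)
    also have "\<dots> = M"
      unfolding M_def P_def[symmetric] prod.reindex_bij_betw[OF bij, symmetric] ..
    finally show "cmod w \<le> M" .
  qed
qed

lemma root_of_monic_pcompose_monom:
  fixes Ps :: "int poly" and M :: real
  assumes monic: "lead_coeff Ps = 1" and root: "poly (map_poly of_int Ps) (complex_of_real M) = 0"
    and bound: "\<And>w. poly (map_poly of_int Ps) w = 0 \<Longrightarrow> cmod w \<le> M"
    and "M \<ge> 1" and "d > 0"
  obtains Q where "lead_coeff Q = 1" and "poly (map_poly of_int Q) (complex_of_real (root d M)) = 0"
    and "\<And>z. poly (map_poly of_int Q) z = 0 \<Longrightarrow> cmod z \<le> root d M"
proof
  let ?Q = "pcompose Ps (monom 1 d)"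
  have poly_Q: "poly (map_poly of_int ?Q) z = poly (map_poly of_int Ps) (z ^ d)" for z :: complex
    by (simp add: of_int_hom.map_poly_pcompose poly_pcompose map_poly_monom poly_monom)
  have pow: "root d M ^ d = M" using \<open>M \<ge> 1\<close> \<open>d > 0\<close> by (simp add: real_root_pow_pos2)
  have deg: "degree (monom (1 :: int) d) > 0" using \<open>d > 0\<close> by (simp add: degree_monom_eq)
  show "lead_coeff ?Q = 1" unfolding lead_coeff_comp[OF deg] monic by (simp add: degree_monom_eq)
  show "poly (map_poly of_int ?Q) (complex_of_real (root d M)) = 0"
    unfolding poly_Q of_real_power[symmetric] pow by (rule root)
  fix z :: complex assume "poly (map_poly of_int ?Q) z = 0"
  then have "cmod z ^ d \<le> root d M ^ d" unfolding poly_Q pow norm_power[symmetric] by (rule bound)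
  then show "cmod z \<le> root d M"
    using power_mono_iff[of "cmod z" "root d M" d] \<open>M \<ge> 1\<close> \<open>d > 0\<close> by simp
qed

theorem lemma9p2:
  fixes \<alpha> :: complex
  assumes "algebraic \<alpha>"
  shows "weil_height (complex_of_real (weil_height \<alpha>)) \<le> weil_height \<alpha> \<and>
         (weil_height (complex_of_real (weil_height \<alpha>)) = weil_height \<alpha> \<longleftrightarrow>
          (\<exists>a::nat. \<exists>b::rat. b > 0 \<and> weil_height \<alpha> = real a powr real_of_rat b))"
proof -
  define M where "M = of_int (lead_coeff (min_int_poly \<alpha>)) * (\<Prod>z\<in>conjugates \<alpha>. max 1 (cmod z))"
  define d where "d = degree (min_int_poly \<alpha>)"
  have "d > 0" unfolding d_def by (rule conjugates_min_int_poly(3)[OF assms])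
  have "1 * 1 \<le> M"
    unfolding M_def using min_int_poly(2)[OF assms] by (intro mult_mono prod_ge_1) auto
  then have "M \<ge> 1" by simp
  have height: "weil_height \<alpha> = root d M" unfolding weil_height_conjugates d_def M_def ..
  have "root d M \<ge> 1" using \<open>M \<ge> 1\<close> \<open>d > 0\<close> by simp
  obtain Ps where "lead_coeff Ps = 1" "poly (map_poly of_int Ps) (complex_of_real M) = 0"
    "\<And>w. poly (map_poly of_int Ps) w = 0 \<Longrightarrow> cmod w \<le> M"
    using mahler_measure_root_of_monic[OF assms, folded M_def] by blast
  from root_of_monic_pcompose_monom[OF this \<open>M \<ge> 1\<close> \<open>d > 0\<close>] obtain Q where
    Q: "lead_coeff Q = 1" "poly (map_poly of_int Q) (complex_of_real (root d M)) = 0"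
       "\<And>z. poly (map_poly of_int Q) z = 0 \<Longrightarrow> cmod z \<le> root d M" by blast
  show ?thesis
    unfolding height
    using weil_height_le_of_monic_root_bound[OF \<open>root d M \<ge> 1\<close> Q]
      rational_power_of_weil_height_eq[OF \<open>root d M \<ge> 1\<close> Q]
      weil_height_rational_power[OF \<open>root d M \<ge> 1\<close>] by blast
qed

end
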